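(* Let $n\ge1$. Let $\mathbf{R}$ be a subalgebra of $\mathbf{P\L}_n\times\mathbf{P\L}_n$ with $\mathbf{R}\subseteq{\le}$. Assume $\mathbf{R}$ is not the diagonal of a subalgebra of $\mathbf{P\L}_n$. Let $\mathbf{S}=\mathrm{pr}_1(\mathbf{R})\times\mathrm{pr}_2(\mathbf{R})=\mathbf{P\L}_k\times\mathbf{P\L}_{k'}$, where $k,k'$ are divisors of $n$. Then there exists $\overline{\mathbf{R}}\in\mathcal{S}_n$ with $\mathbf{R}=\overline{\mathbf{R}}\cap\mathbf{S}$.
   Context: For $n\ge 1$, the algebra $\mathbf{P\L}_n=\langle\{0,\tfrac1n,\dots,\tfrac{n-1}{n},1\},\wedge,\vee,\odot,\oplus,0,1\rangle$ has $\wedge=\min$, $\vee=\max$, $x\odot y=\max\{0,x+y-1\}$ and $x\oplus y=\min\{1,x+y\}$. For a divisor $k$ of $n$, $\mathbf{P\L}_k$ is the subalgebra with universe $\{\tfrac ik:0\le i\le k\}$. The relations are ${\le}=\{(x,y): x\le y\}$ and $\lhd=\{(x,y):x=0\text{ or }y=1\}$. The set $\mathcal{S}_n$ is the collection of all subalgebras $\mathbf{R}$ of $\mathbf{P\L}_n\times\mathbf{P\L}_n$ with $\lhd\subseteq\mathbf{R}\subseteq{\le}$. *)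

theory Defs
  imports Complex_Main
begin

definition PL :: "nat \<Rightarrow> rat set" where
  "PL n = {of_nat i / of_nat n | i. i \<le> n}"

definition odot :: "rat \<Rightarrow> rat \<Rightarrow> rat" where
  "odot x y = max 0 (x + y - 1)"

definition oplus :: "rat \<Rightarrow> rat \<Rightarrow> rat" where
  "oplus x y = min 1 (x + y)"

definition subalg :: "nat \<Rightarrow> rat set \<Rightarrow> bool" where
  "subalg n A \<longleftrightarrow> A \<subseteq> PL n \<and> 0 \<in> A \<and> 1 \<in> A \<and>
     (\<forall>x\<in>A. \<forall>y\<in>A. min x y \<in> A \<and> max x y \<in> A \<and> odot x y \<in> A \<and> oplus x y \<in> A)"

definition subalg2 :: "nat \<Rightarrow> (rat \<times> rat) set \<Rightarrow> bool" where
  "subalg2 n R \<longleftrightarrow> R \<subseteq> PL n \<times> PL n \<and> (0, 0) \<in> R \<and> (1, 1) \<in> R \<and>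
     (\<forall>(x1, x2)\<in>R. \<forall>(y1, y2)\<in>R.
        (min x1 y1, min x2 y2) \<in> R \<and> (max x1 y1, max x2 y2) \<in> R \<and>
        (odot x1 y1, odot x2 y2) \<in> R \<and> (oplus x1 y1, oplus x2 y2) \<in> R)"

definition leR :: "nat \<Rightarrow> (rat \<times> rat) set" where
  "leR n = {(x, y). x \<in> PL n \<and> y \<in> PL n \<and> x \<le> y}"

definition lhdR :: "nat \<Rightarrow> (rat \<times> rat) set" where
  "lhdR n = {(x, y). x \<in> PL n \<and> y \<in> PL n \<and> (x = 0 \<or> y = 1)}"

definition diag :: "rat set \<Rightarrow> (rat \<times> rat) set" where
  "diag A = {(a, a) | a. a \<in> A}"

definition Sn :: "nat \<Rightarrow> (rat \<times> rat) set set" where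
  "Sn n = {R. subalg2 n R \<and> lhdR n \<subseteq> R \<and> R \<subseteq> leR n}"

end

theory Submission
  imports Defs
begin

text \<open>
  If R is not a diagonal it contains a pair (a, b) with a < b. Since the first projection is all
  of PL_k, also (1 - a, c) \<in> R for some c \<ge> 1 - a, and the \<odot>-product of the two pairs is
  (0, d) with d > 0; adding (0, d) to itself n times gives (0, 1) \<in> R. The relation
  \<ge> \<circ> R \<circ> \<le> then belongs to S_n, and (0, 1) \<in> R lets one recover any of its pairs
  (x, y) with x, y in the respective projections of R inside R by meets and joins.
\<close>

lemma PL_range: "x \<in> PL n \<Longrightarrow> 0 \<le> x \<and> x \<le> 1"
  by (auto simp: PL_def divide_le_eq_1)

lemma one_minus_PL:
  assumes "0 < n" "x \<in> PL n"
  shows "1 - x \<in> PL n"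
proof -
  obtain i where "x = of_nat i / of_nat n" "i \<le> n"
    using assms(2) by (auto simp: PL_def)
  then have "1 - x = of_nat (n - i) / of_nat n"
    using assms(1) by (simp add: field_simps of_nat_diff)
  then show ?thesis
    by (auto simp: PL_def)
qed

lemma PL_odot:
  assumes "n \<ge> 1" "x \<in> PL n" "y \<in> PL n"
  shows "odot x y \<in> PL n"
proof -
  obtain i j where x: "x = of_nat i / of_nat n" and "i \<le> n"
    and y: "y = of_nat j / of_nat n" and "j \<le> n"
    using assms(2,3) by (auto simp: PL_def)
  have n: "(of_nat n :: rat) > 0"
    using assms(1) by simp
  show ?thesis
  proof (cases "i + j \<le> n")
    case True
    then have "x + y - 1 \<le> 0"
      using n by (simp add: x y field_simps flip: of_nat_add)
    then have "odot x y = of_nat 0 / of_nat n"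
      by (simp add: odot_def)
    then show ?thesis
      unfolding PL_def by blast
  next
    case False
    then have "x + y - 1 = of_nat (i + j - n) / of_nat n"
      using n by (simp add: x y field_simps of_nat_diff)
    then have "odot x y = of_nat (i + j - n) / of_nat n"
      by (simp add: odot_def)
    moreover have "i + j - n \<le> n"
      using \<open>i \<le> n\<close> \<open>j \<le> n\<close> by simp
    ultimately show ?thesis
      unfolding PL_def by blast
  qed
qed

lemma PL_oplus:
  assumes "n \<ge> 1" "x \<in> PL n" "y \<in> PL n"
  shows "oplus x y \<in> PL n"
proof -
  obtain i j where "x = of_nat i / of_nat n" "y = of_nat j / of_nat n"
    using assms(2,3) by (auto simp: PL_def)
  then have sum: "x + y = of_nat (i + j) / of_nat n"
    by (simp add: add_divide_distrib)
  have n: "(of_nat n :: rat) > 0"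
    using assms(1) by simp
  show ?thesis
  proof (cases "i + j \<le> n")
    case True
    then have "oplus x y = of_nat (i + j) / of_nat n"
      using n by (simp add: oplus_def sum divide_le_eq_1)
    then show ?thesis
      using True unfolding PL_def by blast
  next
    case False
    then have "oplus x y = of_nat n / of_nat n"
      using n by (simp add: oplus_def sum le_divide_eq_1)
    then show ?thesis
      unfolding PL_def by blast
  qed
qed

lemma odot_mono: "x \<le> a \<Longrightarrow> y \<le> b \<Longrightarrow> odot x y \<le> odot a b"
  by (simp add: odot_def)

lemma oplus_mono: "x \<le> a \<Longrightarrow> y \<le> b \<Longrightarrow> oplus x y \<le> oplus a b"
  by (simp add: oplus_def)

lemma subalg2_closed:
  assumes "subalg2 n R" "(x1, x2) \<in> R" "(y1, y2) \<in> R"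
  shows "(min x1 y1, min x2 y2) \<in> R" "(max x1 y1, max x2 y2) \<in> R"
    and "(odot x1 y1, odot x2 y2) \<in> R" "(oplus x1 y1, oplus x2 y2) \<in> R"
  using assms unfolding subalg2_def by fastforce+

lemma subalg2_diag:
  assumes R: "subalg2 n R" and eq: "\<forall>(a, b) \<in> R. a = b"
  shows "subalg n (fst ` R) \<and> R = diag (fst ` R)"
proof
  show "subalg n (fst ` R)"
    unfolding subalg_def
  proof (intro conjI ballI)
    show "fst ` R \<subseteq> PL n" "0 \<in> fst ` R" "1 \<in> fst ` R"
      using R unfolding subalg2_def by force+
  next
    fix x y
    assume "x \<in> fst ` R" "y \<in> fst ` R"
    then obtain x' y' where "(x, x') \<in> R" "(y, y') \<in> R"
      by auto
    from subalg2_closed[OF R this]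
    show "min x y \<in> fst ` R" "max x y \<in> fst ` R" "odot x y \<in> fst ` R" "oplus x y \<in> fst ` R"
      by force+
  qed
  show "R = diag (fst ` R)"
    using eq unfolding diag_def by force
qed

lemma subalg2_oplus_iterate:
  assumes R: "subalg2 n R" and d: "(0, d) \<in> R" "0 \<le> d" "d \<le> 1"
  shows "(0, min 1 (of_nat (Suc m) * d)) \<in> R"
proof (induction m)
  case 0
  then show ?case
    using d by simp
next
  case (Suc m)
  have "oplus (min 1 (of_nat (Suc m) * d)) d = min 1 (of_nat (Suc (Suc m)) * d)"
    using d(2) by (simp add: oplus_def algebra_simps min_def)
  then show ?case
    using subalg2_closed(4)[OF R Suc d(1)] by (simp add: oplus_def)
qed

lemma subalg2_zero_one:
  assumes "n \<ge> 1" and R: "subalg2 n R" and d: "(0, d) \<in> R" "0 < d"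
  shows "(0, 1) \<in> R"
proof -
  have "d \<in> PL n"
    using R d(1) unfolding subalg2_def by blast
  then obtain j where j: "d = of_nat j / of_nat n"
    by (auto simp: PL_def)
  then have "j \<ge> 1"
    using d(2) by (cases j) auto
  then have "min 1 (of_nat (Suc (n - 1)) * d) = 1"
    using j \<open>n \<ge> 1\<close> by simp
  with subalg2_oplus_iterate[OF R d(1)] show ?thesis
    using PL_range[OF \<open>d \<in> PL n\<close>] d(2) by (metis less_imp_le)
qed

text \<open>
  Here the hypothesis that the first projection of R is PL_k is needed: a subalgebra need not
  be closed under 1 - x.
\<close>

lemma strict_pair_imp_zero_one:
  assumes "n \<ge> 1" "0 < k" and R: "subalg2 n R" "R \<subseteq> leR n" "fst ` R = PL k"
    and ab: "(a, b) \<in> R" "a < b"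
  shows "(0, 1) \<in> R"
proof -
  have "1 - a \<in> PL k"
    using one_minus_PL[OF \<open>0 < k\<close>] ab(1) R(3) by force
  then obtain c where c: "(1 - a, c) \<in> R"
    using R(3) by force
  then have "1 - a \<le> c"
    using R(2) by (auto simp: leR_def)
  then have "(0, odot b c) \<in> R" "0 < odot b c"
    using subalg2_closed(3)[OF R(1) ab(1) c] ab(2) by (simp_all add: odot_def)
  then show ?thesis
    using subalg2_zero_one[OF \<open>n \<ge> 1\<close> R(1)] by blast
qed

definition widen :: "nat \<Rightarrow> (rat \<times> rat) set \<Rightarrow> (rat \<times> rat) set" where
  "widen n R = {(x, y). x \<in> PL n \<and> y \<in> PL n \<and> (\<exists>(a, b) \<in> R. x \<le> a \<and> b \<le> y)}"

lemma subalg2_widen: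
  assumes "n \<ge> 1" and R: "subalg2 n R"
  shows "subalg2 n (widen n R)"
proof -
  have closed: "(min x1 y1, min x2 y2) \<in> widen n R \<and> (max x1 y1, max x2 y2) \<in> widen n R \<and>
      (odot x1 y1, odot x2 y2) \<in> widen n R \<and> (oplus x1 y1, oplus x2 y2) \<in> widen n R"
    if "(x1, x2) \<in> widen n R" "(y1, y2) \<in> widen n R" for x1 x2 y1 y2
  proof -
    from that obtain a1 b1 a2 b2
      where x: "x1 \<in> PL n" "x2 \<in> PL n" "(a1, b1) \<in> R" "x1 \<le> a1" "b1 \<le> x2"
        and y: "y1 \<in> PL n" "y2 \<in> PL n" "(a2, b2) \<in> R" "y1 \<le> a2" "b2 \<le> y2"
      unfolding widen_def by auto
    note ops = subalg2_closed[OF R x(3) y(3)]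
    have "(min x1 y1, min x2 y2) \<in> widen n R"
      unfolding widen_def using x y ops
      by (auto intro!: bexI[of _ "(min a1 a2, min b1 b2)"] simp: min_def)
    moreover have "(max x1 y1, max x2 y2) \<in> widen n R"
      unfolding widen_def using x y ops
      by (auto intro!: bexI[of _ "(max a1 a2, max b1 b2)"] simp: max_def)
    moreover have "(odot x1 y1, odot x2 y2) \<in> widen n R"
      unfolding widen_def using x y ops \<open>n \<ge> 1\<close>
      by (auto intro!: bexI[of _ "(odot a1 a2, odot b1 b2)"] odot_mono PL_odot)
    moreover have "(oplus x1 y1, oplus x2 y2) \<in> widen n R"
      unfolding widen_def using x y ops \<open>n \<ge> 1\<close>
      by (auto intro!: bexI[of _ "(oplus a1 a2, oplus b1 b2)"] oplus_mono PL_oplus)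
    ultimately show ?thesis
      by blast
  qed
  have "(0, 0) \<in> R" "(1, 1) \<in> R" "R \<subseteq> PL n \<times> PL n"
    using R unfolding subalg2_def by auto
  then have "widen n R \<subseteq> PL n \<times> PL n" "(0, 0) \<in> widen n R" "(1, 1) \<in> widen n R"
    unfolding widen_def by force+
  with closed show ?thesis
    unfolding subalg2_def by blast
qed

lemma widen_in_Sn:
  assumes "n \<ge> 1" "subalg2 n R" "R \<subseteq> leR n"
  shows "widen n R \<in> Sn n"
proof -
  have "(0, 0) \<in> R" "(1, 1) \<in> R"
    using assms(2) unfolding subalg2_def by auto
  then have "lhdR n \<subseteq> widen n R"
    unfolding lhdR_def widen_def using PL_range by fastforce
  moreover have "widen n R \<subseteq> leR n"
    using assms(3) unfolding widen_def leR_def by fastforce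
  ultimately show ?thesis
    unfolding Sn_def using subalg2_widen[OF assms(1,2)] by blast
qed

lemma widen_Int_projections:
  assumes R: "subalg2 n R" and "(0, 1) \<in> R"
  shows "R = widen n R \<inter> (fst ` R \<times> snd ` R)"
proof
  have "R \<subseteq> PL n \<times> PL n"
    using R unfolding subalg2_def by blast
  then show "R \<subseteq> widen n R \<inter> (fst ` R \<times> snd ` R)"
    unfolding widen_def by force
next
  show "widen n R \<inter> (fst ` R \<times> snd ` R) \<subseteq> R"
  proof
    fix p
    assume "p \<in> widen n R \<inter> (fst ` R \<times> snd ` R)"
    then obtain x y a b c e where p: "p = (x, y)" and ab: "(a, b) \<in> R" "x \<le> a" "b \<le> y"
      and xc: "(x, c) \<in> R" and ey: "(e, y) \<in> R"
      unfolding widen_def by force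
    have box: "0 \<le> p \<and> p \<le> 1 \<and> 0 \<le> q \<and> q \<le> 1" if "(p, q) \<in> R" for p q
      using R that PL_range unfolding subalg2_def by blast
    have "(max x 0, max c 1) = (x, 1)"
      using box[OF xc] by simp
    then have x1: "(x, 1) \<in> R"
      using subalg2_closed(2)[OF R xc \<open>(0, 1) \<in> R\<close>] by simp
    have "(min a x, min b 1) = (x, b)"
      using box[OF ab(1)] ab(2) by simp
    then have xb: "(x, b) \<in> R"
      using subalg2_closed(1)[OF R ab(1) x1] by simp
    have "(min e 0, min y 1) = (0, y)"
      using box[OF ey] by simp
    then have y0: "(0, y) \<in> R"
      using subalg2_closed(1)[OF R ey \<open>(0, 1) \<in> R\<close>] by simp
    have "(max x 0, max b y) = (x, y)"
      using box[OF xc] ab(3) by simp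
    then show "p \<in> R"
      using subalg2_closed(2)[OF R xb y0] p by simp
  qed
qed

theorem lemma3p14:
  fixes n k k' :: nat and R :: "(rat \<times> rat) set"
  assumes "n \<ge> 1"
    and "subalg2 n R"
    and "R \<subseteq> leR n"
    and "\<not> (\<exists>A. subalg n A \<and> R = diag A)"
    and "k dvd n" and "k' dvd n"
    and "fst ` R = PL k" and "snd ` R = PL k'"
  shows "\<exists>Rb \<in> Sn n. R = Rb \<inter> (fst ` R \<times> snd ` R)"
proof -
  obtain a b where "(a, b) \<in> R" "a \<noteq> b"
    using subalg2_diag[OF assms(2)] assms(4) by auto
  then have "a < b"
    using assms(3) by (auto simp: leR_def)
  have "0 < k"
    using assms(1,5) dvd_pos_nat[of n k] by simp
  have "(0, 1) \<in> R"
    using strict_pair_imp_zero_one[OF assms(1) \<open>0 < k\<close> assms(2,3,7) \<open>(a, b) \<in> R\<close> \<open>a < b\<close>] .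
  then show ?thesis
    using widen_in_Sn[OF assms(1-3)] widen_Int_projections[OF assms(2)] by blast
qed

end
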